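(* Let $g$ be a semisimple complex Lie algebra of dimension $24$ arising as the Lie algebra of an $\mathcal{N}=1$ structure on $F_{24}$ (see context), with rank $r$, Cartan subalgebra $h$, root system $\Delta_g$, positive roots $\Delta_g^+$, Weyl vector $\rho$, root lattice $Q_g$ and coroot lattice $Q_g^\vee$. Let $\hat\Delta\subset \mathbb{Z}\times\mathbb{Z}\times \tilde Q_g$ be the set of roots defined in the context, and for $\gamma=(m,n,w)\in\hat\Delta$ and $L\in\mathbb{Z}_{>0}$, $\eta\in h$, put $\gamma(\mathsf{h}):=L(m+n)+w(\eta)$, where $\mathsf{h}:=-LP^+-LP^-+\eta$ and $w(\eta)$ is the natural pairing of $w\in h^*$ with $\eta\in h$. Let $\eta\in Q_g^\vee\subset h$ satisfy $\alpha(\eta)\neq 0$ for all $\alpha\in\Delta_g$. Then there exists a positive integer $L$ such that $\mathsf{h}=-LP^+-LP^-+\eta$ satisfies: 1. if $\gamma=(m,n,w)\in\hat\Delta$, then $\gamma(\mathsf{h})\neq 0$; 2. if $\gamma=(m,n,w)\in\hat\Delta$ with $m>0$ or $n>0$, then $\gamma(\mathsf{h})>0$; 3. for every $N>0$ there are only finitely many $\gamma\in\hat\Delta$ with $0<|\gamma(\mathsf{h})|<N$; 4. if $\alpha=(m,n,w)\in\hat\Delta$ satisfies $\langle\alpha|\alpha\rangle:=-2mn+(w|w)=0$, and $\gamma=(0,0,w')\in\hat\Delta$, then $|\alpha(\mathsf{h})|>|\gamma(\mathsf{h})|$.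
   Context: $F_{24}$ is the super vertex operator algebra of $24$ chiral free fermions $\lambda^1,\dots,\lambda^{24}$ with OPE $\lambda^i(z)\lambda^j(w)\sim\delta^{ij}/(z-w)$ and stress tensor $T=-\frac12\sum_i:\lambda^i\partial\lambda^i:$ (central charge $12$). An $\mathcal{N}=1$ structure is a supercurrent $G=-\frac{i}{6}\sum_{i,j,k}c_{ijk}:\lambda^i\lambda^j\lambda^k:$ with $c_{ijk}$ totally antisymmetric, satisfying $\sum_k(c_{ijk}c_{klm}+c_{lik}c_{kjm}+c_{jlk}c_{kim})=0$ and $\sum_{k,l}c_{ikl}c_{jkl}=2\delta_{ij}$; then $c_{ijk}$ are structure constants ($[t^j,t^k]=ic_{jkl}t^l$) of a $24$-dimensional semisimple Lie algebra $g$, realized by the zero modes of the currents $J^a=-\frac i2\sum c_{ajk}:\lambda^j\lambda^k:$, and the $\lambda^a$ transform in the adjoint of $g$. The Killing form is normalized as $(t|u)=\frac12\mathrm{Tr}(\mathrm{ad}\,t\,\mathrm{ad}\,u)$ (so long roots of a simple component $g_k$ have squared length $2/h^\vee_{g_k}$); it is used to identify $h\cong h^*$. $Q_g=\sum\mathbb{Z}\alpha_i$, $Q_g^\vee=\sum\mathbb{Z}\alpha_i^\vee$, $P_g=(Q_g^\vee)^*$, $\tilde Q_g:=Q_g\cup(\rho+Q_g)$, $\rho=\frac12\sum_{\alpha\in\Delta_g^+}\alpha$. Root multiplicities. Let $c_{NS-}(n,w)$, $n\in\mathbb{Z}$, $w\in P_g$, be the dimension of the subspace of $F_{24}$ of odd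 fermion number with $L_0-\frac12=n$ and $h$-weight $w$; equivalently $\sum_{n,w}c_{NS-}(n,w)q^ne^{w}$ is the part with integral powers of $q$ of $q^{-1/2}\prod_{n\ge1}(1+q^{n-1/2})^r\prod_{\alpha\in\Delta_g^+}(1+q^{n-1/2}e^{\alpha})(1+q^{n-1/2}e^{-\alpha})$. Let $c_{R+}(n,w)$ be the dimension of the positive fermion number subspace of the canonically twisted (Ramond) module of $F_{24}$ with $L_0-\frac12=n$ and weight $w$; equivalently $\sum c_{R+}(n,w)q^ne^w=\frac12\,2^{r/2}e^{-\rho}q\prod_{m\ge1}(1+q^m)^r\prod_{\alpha\in\Delta_g^+}\prod_{n\ge0}(1+q^ne^{\alpha})\prod_{k\ge1}(1+q^ke^{-\alpha})$. The set of roots is $\hat\Delta:=\{(m,n,w)\in\mathbb{Z}\times\mathbb{Z}\times\tilde Q_g\setminus\{0\}:\ (w\in Q_g\text{ and }c_{NS-}(mn,w)\neq0)\text{ or }(w\in\rho+Q_g\text{ and }c_{R+}(mn,w)\neq0)\}$. $P^+,P^-$ are formal symbols (momentum operators); the bilinear form on $\mathbb{Z}^2\times\tilde Q_g$ is $\langle(m,n,w)|(m',n',w')\rangle=-(mn'+m'n)+(w|w')$. *)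

theory Defs
  imports "HOL-Analysis.Analysis"
begin

text \<open>The Cartan subalgebra h is modelled (over the reals, i.e. its real span of coroots)
  as real^'r, with r = CARD('r) the rank. Elements of h^* (weights, roots) are also
  represented in real^'r, the natural pairing w(t) being the inner product w \<bullet> t.\<close>

text \<open>Abstract (reduced, crystallographic) root system in h^*, spanning: exactly the
  root systems of complex semisimple Lie algebras with Cartan subalgebra h.\<close>
definition is_root_system :: "(real^'r) set \<Rightarrow> bool" where
  "is_root_system \<Delta> \<longleftrightarrow> finite \<Delta> \<and> 0 \<notin> \<Delta> \<and> span \<Delta> = UNIV \<and>
     (\<forall>\<alpha>\<in>\<Delta>. \<forall>c::real. c *\<^sub>R \<alpha> \<in> \<Delta> \<longrightarrow> c = 1 \<or> c = -1) \<and>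
     (\<forall>\<alpha>\<in>\<Delta>. \<exists>a. \<alpha> \<bullet> a = 2 \<and>
        (\<forall>\<beta>\<in>\<Delta>. \<beta> \<bullet> a \<in> \<int> \<and> \<beta> - (\<beta> \<bullet> a) *\<^sub>R \<alpha> \<in> \<Delta>))"

definition is_pos_system :: "(real^'r) set \<Rightarrow> (real^'r) set \<Rightarrow> bool" where
  "is_pos_system \<Delta> \<Delta>p \<longleftrightarrow> (\<exists>v. (\<forall>\<alpha>\<in>\<Delta>. \<alpha> \<bullet> v \<noteq> 0) \<and> \<Delta>p = {\<alpha>\<in>\<Delta>. \<alpha> \<bullet> v > 0})"

definition weyl_vector :: "(real^'r) set \<Rightarrow> real^'r" where
  "weyl_vector \<Delta>p = (1/2) *\<^sub>R (\<Sum>\<alpha>\<in>\<Delta>p. \<alpha>)"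

text \<open>Normalized Killing form on h: (t|u) = 1/2 Tr(ad t ad u) = 1/2 sum over roots.\<close>
definition kil :: "(real^'r) set \<Rightarrow> real^'r \<Rightarrow> real^'r \<Rightarrow> real" where
  "kil \<Delta> t u = (1/2) * (\<Sum>\<alpha>\<in>\<Delta>. (\<alpha> \<bullet> t) * (\<alpha> \<bullet> u))"

definition tvec :: "(real^'r) set \<Rightarrow> real^'r \<Rightarrow> real^'r" where
  "tvec \<Delta> w = (THE t. \<forall>u. kil \<Delta> t u = w \<bullet> u)"

definition dform :: "(real^'r) set \<Rightarrow> real^'r \<Rightarrow> real^'r \<Rightarrow> real" where
  "dform \<Delta> w w' = w \<bullet> tvec \<Delta> w'"

definition coroot :: "(real^'r) set \<Rightarrow> real^'r \<Rightarrow> real^'r" where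
  "coroot \<Delta> \<alpha> = (2 / dform \<Delta> \<alpha> \<alpha>) *\<^sub>R tvec \<Delta> \<alpha>"

definition zspan :: "(real^'r) set \<Rightarrow> (real^'r) set" where
  "zspan S = {x. \<exists>k::real^'r \<Rightarrow> int. x = (\<Sum>s\<in>S. of_int (k s) *\<^sub>R s)}"

definition root_lattice :: "(real^'r) set \<Rightarrow> (real^'r) set" where
  "root_lattice \<Delta> = zspan \<Delta>"

definition coroot_lattice :: "(real^'r) set \<Rightarrow> (real^'r) set" where
  "coroot_lattice \<Delta> = zspan (coroot \<Delta> ` \<Delta>)"

text \<open>Fermion index set: r Cartan fermions (Inl j) and one fermion per root (Inr alpha);
  h-weight of each fermion.\<close>
definition fidx :: "(real^'r) set \<Rightarrow> ('r + real^'r) set" where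
  "fidx \<Delta> = range Inl \<union> Inr ` \<Delta>"

fun fwt :: "('r + real^'r) \<Rightarrow> real^'r" where
  "fwt (Inl j) = 0"
| "fwt (Inr \<alpha>) = \<alpha>"

text \<open>c_{NS-}(n,w): states are finite sets of (fermion, k) with k meaning mode k+1/2;
  odd fermion number, L_0 - 1/2 = n, weight w.\<close>
definition cNS :: "(real^'r) set \<Rightarrow> int \<Rightarrow> real^'r \<Rightarrow> nat" where
  "cNS \<Delta> n w = card {S. finite S \<and> S \<subseteq> fidx \<Delta> \<times> UNIV \<and> odd (card S) \<and>
      (\<Sum>(i,k)\<in>S. real k + 1/2) = real_of_int n + 1/2 \<and>
      (\<Sum>(i,k)\<in>S. fwt i) = w}"

text \<open>c_{R+}(n,w): coefficient of q^n e^w in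
  1/2 2^{r/2} e^{-rho} q prod_{m>=1}(1+q^m)^r prod_{alpha>0} prod_{n>=0}(1+q^n e^alpha)
  prod_{k>=1}(1+q^k e^{-alpha}); a monomial is a finite set of (fermion, mode) with
  mode 0 allowed only for positive roots.\<close>
definition cR :: "(real^'r) set \<Rightarrow> (real^'r) set \<Rightarrow> int \<Rightarrow> real^'r \<Rightarrow> real" where
  "cR \<Delta> \<Delta>p n w = (2 powr (real CARD('r) / 2) / 2) *
     real (card {S. finite S \<and> S \<subseteq> fidx \<Delta> \<times> UNIV \<and>
        (\<forall>(i,k)\<in>S. k = 0 \<longrightarrow> (\<exists>\<alpha>\<in>\<Delta>p. i = Inr \<alpha>)) \<and>
        1 + int (\<Sum>(i,k)\<in>S. k) = n \<and>
        - weyl_vector \<Delta>p + (\<Sum>(i,k)\<in>S. fwt i) = w})"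

definition hat_roots :: "(real^'r) set \<Rightarrow> (real^'r) set \<Rightarrow> (int \<times> int \<times> (real^'r)) set" where
  "hat_roots \<Delta> \<Delta>p = {(m,n,w). (m,n,w) \<noteq> (0,0,0) \<and>
     ((w \<in> root_lattice \<Delta> \<and> cNS \<Delta> (m*n) w \<noteq> 0) \<or>
      (w \<in> (\<lambda>q. weyl_vector \<Delta>p + q) ` root_lattice \<Delta> \<and> cR \<Delta> \<Delta>p (m*n) w \<noteq> 0))}"

definition hval :: "int \<Rightarrow> real^'r \<Rightarrow> int \<times> int \<times> (real^'r) \<Rightarrow> real" where
  "hval L \<eta> \<gamma> = (case \<gamma> of (m,n,w) \<Rightarrow> real_of_int (L * (m + n)) + w \<bullet> \<eta>)"

definition norm2 :: "(real^'r) set \<Rightarrow> int \<times> int \<times> (real^'r) \<Rightarrow> real" where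
  "norm2 \<Delta> \<gamma> = (case \<gamma> of (m,n,w) \<Rightarrow> - 2 * real_of_int (m*n) + dform \<Delta> w w)"

end

theory Submission
  imports Defs
begin

text \<open>A root (m, n, w) is the weight, shifted by 0 or -\<rho>, of a set of fermion modes whose
  mode numbers add up to at most mn. Hence mn \<ge> 0, so m and n have the same sign, and at most
  (dim g + 1)|m + n| fermions occur; thus |w(\<eta>)| \<le> A|m + n| for an explicit slope A. Once
  L > A + \<Sum> |\<alpha>(\<eta>)| (sum over the roots \<alpha> of g), the term L(m + n) dominates \<gamma>(h) whenever
  m + n \<noteq> 0. The remaining roots are (0, 0, \<alpha>) with \<alpha> a root of g, for which
  \<gamma>(h) = \<alpha>(\<eta>) \<noteq> 0 and \<langle>\<gamma>|\<gamma>\<rangle> = (\<alpha>|\<alpha>) > 0.\<close>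

lemma kil_self:
  "kil \<Delta> t t = (1/2) * (\<Sum>\<beta>\<in>\<Delta>. (\<beta> \<bullet> t)\<^sup>2)"
  unfolding kil_def by (simp add: power2_eq_square)

lemma kil_self_pos:
  fixes \<Delta> :: "(real^'r) set"
  assumes fin: "finite \<Delta>" and sp: "span \<Delta> = UNIV" and "t \<noteq> 0"
  shows "kil \<Delta> t t > 0"
proof -
  have "\<exists>\<beta>\<in>\<Delta>. \<beta> \<bullet> t \<noteq> 0"
  proof (rule ccontr)
    assume "\<not> (\<exists>\<beta>\<in>\<Delta>. \<beta> \<bullet> t \<noteq> 0)"
    then have "orthogonal t \<beta>" if "\<beta> \<in> \<Delta>" for \<beta>
      using that by (simp add: orthogonal_def inner_commute)
    then have "orthogonal t t" using orthogonal_to_span[of t \<Delta> t] sp by blast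
    with \<open>t \<noteq> 0\<close> show False by (simp add: orthogonal_def)
  qed
  then obtain \<beta> where \<beta>: "\<beta> \<in> \<Delta>" "\<beta> \<bullet> t \<noteq> 0" by blast
  have "0 < (\<beta> \<bullet> t)\<^sup>2" using \<beta>(2) by simp
  also have "\<dots> \<le> (\<Sum>\<beta>\<in>\<Delta>. (\<beta> \<bullet> t)\<^sup>2)"
    using member_le_sum[of \<beta> \<Delta> "\<lambda>\<beta>. (\<beta> \<bullet> t)\<^sup>2"] fin \<beta>(1) by simp
  finally show ?thesis by (simp add: kil_self)
qed

lemma kil_tvec:
  fixes \<Delta> :: "(real^'r) set"
  assumes fin: "finite \<Delta>" and sp: "span \<Delta> = UNIV"
  shows "kil \<Delta> (tvec \<Delta> w) u = w \<bullet> u"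
proof -
  define K where "K t = (1/2) *\<^sub>R (\<Sum>\<beta>\<in>\<Delta>. (\<beta> \<bullet> t) *\<^sub>R \<beta>)" for t :: "real^'r"
  have kil_K: "kil \<Delta> t u = K t \<bullet> u" for t u
    unfolding kil_def K_def by (simp add: inner_sum_left sum_distrib_left algebra_simps)
  have "linear K"
    by (rule linearI)
      (simp_all add: K_def sum.distrib scaleR_sum_right algebra_simps)
  moreover have "inj K"
  proof -
    have "t = 0" if "K t = 0" for t
      using kil_self_pos[OF fin sp, of t] kil_K[of t t] that by fastforce
    with \<open>linear K\<close> show ?thesis by (simp add: linear_injective_0)
  qed
  ultimately have "surj K" using linear_injective_imp_surjective by blast
  then obtain t where t: "K t = w" by (metis surjD)
  have "tvec \<Delta> w = t"
    unfolding tvec_def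
  proof (rule the_equality)
    show "\<forall>u. kil \<Delta> t u = w \<bullet> u" using kil_K t by simp
    fix t' assume "\<forall>u. kil \<Delta> t' u = w \<bullet> u"
    then have "K t' = K t" using kil_K t by (simp add: vector_eq_rdot)
    then show "t' = t" using \<open>inj K\<close> by (simp add: inj_eq)
  qed
  then show ?thesis using kil_K t by simp
qed

lemma dform_self_pos:
  fixes \<Delta> :: "(real^'r) set"
  assumes fin: "finite \<Delta>" and sp: "span \<Delta> = UNIV" and "w \<noteq> 0"
  shows "dform \<Delta> w w > 0"
proof -
  have "tvec \<Delta> w \<noteq> 0"
    using kil_tvec[OF fin sp, of w w] \<open>w \<noteq> 0\<close> by (auto simp: kil_def)
  then have "kil \<Delta> (tvec \<Delta> w) (tvec \<Delta> w) > 0" by (rule kil_self_pos[OF fin sp])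
  then show ?thesis by (simp add: dform_def kil_tvec[OF fin sp] inner_commute)
qed

lemma abs_add_eq_of_mult_nonneg:
  fixes m n :: "'a :: linordered_idom"
  assumes "0 \<le> m * n"
  shows "\<bar>m + n\<bar> = \<bar>m\<bar> + \<bar>n\<bar>"
  using assms by (auto simp: zero_le_mult_iff abs_if)

lemma cNS_nonzero_state:
  assumes "cNS \<Delta> n w \<noteq> 0"
  obtains S where "finite S" "S \<subseteq> fidx \<Delta> \<times> UNIV"
    "2 * int (\<Sum>(i,k)\<in>S. k) + int (card S) = 2 * n + 1" "w = (\<Sum>(i,k)\<in>S. fwt i)"
proof -
  have "{S. finite S \<and> S \<subseteq> fidx \<Delta> \<times> UNIV \<and> odd (card S) \<and>
      (\<Sum>(i,k)\<in>S. real k + 1/2) = real_of_int n + 1/2 \<and> (\<Sum>(i,k)\<in>S. fwt i) = w} \<noteq> {}"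
    using assms unfolding cNS_def by (metis card.empty)
  then obtain S where S: "finite S" "S \<subseteq> fidx \<Delta> \<times> UNIV"
    and energy: "(\<Sum>(i,k)\<in>S. real k + 1/2) = real_of_int n + 1/2"
    and w: "w = (\<Sum>(i,k)\<in>S. fwt i)"
    by blast
  have "(\<Sum>(i,k)\<in>S. real k + 1/2) = real (\<Sum>(i,k)\<in>S. k) + real (card S) / 2"
    by (simp add: split_beta sum.distrib)
  with energy have "real_of_int (2 * int (\<Sum>(i,k)\<in>S. k) + int (card S)) = real_of_int (2 * n + 1)"
    by simp
  then have "2 * int (\<Sum>(i,k)\<in>S. k) + int (card S) = 2 * n + 1"
    by (simp only: of_int_eq_iff)
  with S w show thesis using that by blast
qed

lemma cR_nonzero_state:
  assumes "cR \<Delta> \<Delta>p n w \<noteq> 0"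
  obtains S where "finite S" "S \<subseteq> fidx \<Delta> \<times> UNIV" "1 + int (\<Sum>(i,k)\<in>S. k) = n"
    "w = - weyl_vector \<Delta>p + (\<Sum>(i,k)\<in>S. fwt i)"
proof -
  have "card {S. finite S \<and> S \<subseteq> fidx \<Delta> \<times> UNIV \<and>
      (\<forall>(i,k)\<in>S. k = 0 \<longrightarrow> (\<exists>\<alpha>\<in>\<Delta>p. i = Inr \<alpha>)) \<and> 1 + int (\<Sum>(i,k)\<in>S. k) = n \<and>
      - weyl_vector \<Delta>p + (\<Sum>(i,k)\<in>S. fwt i) = w} \<noteq> 0"
    using assms unfolding cR_def by auto
  then have "{S. finite S \<and> S \<subseteq> fidx \<Delta> \<times> UNIV \<and>
      (\<forall>(i,k)\<in>S. k = 0 \<longrightarrow> (\<exists>\<alpha>\<in>\<Delta>p. i = Inr \<alpha>)) \<and> 1 + int (\<Sum>(i,k)\<in>S. k) = n \<and>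
      - weyl_vector \<Delta>p + (\<Sum>(i,k)\<in>S. fwt i) = w} \<noteq> {}"
    by (metis card.empty)
  then show thesis using that by blast
qed

lemma hat_roots_state:
  assumes "(m, n, w) \<in> hat_roots \<Delta> \<Delta>p"
  obtains c S where "c \<in> {0, - weyl_vector \<Delta>p}" "finite S" "S \<subseteq> fidx \<Delta> \<times> UNIV"
    "int (\<Sum>(i,k)\<in>S. k) \<le> m * n" "w = c + (\<Sum>(i,k)\<in>S. fwt i)"
proof -
  from assms consider "cNS \<Delta> (m * n) w \<noteq> 0" | "cR \<Delta> \<Delta>p (m * n) w \<noteq> 0"
    unfolding hat_roots_def by auto
  then show thesis
  proof cases
    case 1
    then obtain S where "finite S" "S \<subseteq> fidx \<Delta> \<times> UNIV"
      "2 * int (\<Sum>(i,k)\<in>S. k) + int (card S) = 2 * (m * n) + 1" "w = (\<Sum>(i,k)\<in>S. fwt i)"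
      by (rule cNS_nonzero_state)
    then show thesis by (intro that[of 0 S]) auto
  next
    case 2
    then obtain S where "finite S" "S \<subseteq> fidx \<Delta> \<times> UNIV" "1 + int (\<Sum>(i,k)\<in>S. k) = m * n"
      "w = - weyl_vector \<Delta>p + (\<Sum>(i,k)\<in>S. fwt i)"
      by (rule cR_nonzero_state)
    then show thesis by (intro that[of "- weyl_vector \<Delta>p" S]) auto
  qed
qed

lemma hat_roots_mult_nonneg:
  assumes "(m, n, w) \<in> hat_roots \<Delta> \<Delta>p"
  shows "0 \<le> m * n"
  using assms by (rule hat_roots_state) linarith

text \<open>The Ramond sector starts at q^1, so a root with mn = 0 comes from a single
  Neveu-Schwarz fermion of mode 1/2.\<close>
lemma hat_roots_zero_mode:
  assumes "(0, 0, w) \<in> hat_roots \<Delta> \<Delta>p"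
  shows "w \<in> \<Delta>"
proof -
  have "w \<noteq> 0" and sectors: "cNS \<Delta> 0 w \<noteq> 0 \<or> cR \<Delta> \<Delta>p 0 w \<noteq> 0"
    using assms by (auto simp: hat_roots_def)
  have "cR \<Delta> \<Delta>p 0 w = 0"
  proof (rule ccontr)
    assume "cR \<Delta> \<Delta>p 0 w \<noteq> 0"
    then show False by (rule cR_nonzero_state) linarith
  qed
  with sectors have "cNS \<Delta> 0 w \<noteq> 0" by simp
  then obtain S where "finite S" and S: "S \<subseteq> fidx \<Delta> \<times> UNIV"
    and energy: "2 * int (\<Sum>(i,k)\<in>S. k) + int (card S) = 2 * 0 + 1"
    and w: "w = (\<Sum>(i,k)\<in>S. fwt i)"
    by (rule cNS_nonzero_state)
  from energy have "int (2 * (\<Sum>(i,k)\<in>S. k) + card S) = int 1" by simp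
  then have "2 * (\<Sum>(i,k)\<in>S. k) + card S = 1" by (simp only: of_nat_eq_iff)
  then have "card S = 1" by presburger
  then obtain i k where "S = {(i, k)}" by (auto simp: card_Suc_eq)
  with S w \<open>w \<noteq> 0\<close> show ?thesis by (auto simp: fidx_def)
qed

lemma hat_roots_level_zero:
  assumes "(m, n, w) \<in> hat_roots \<Delta> \<Delta>p" "m + n = 0"
  shows "m = 0" "n = 0" "w \<in> \<Delta>"
proof -
  show "m = 0" "n = 0"
    using abs_add_eq_of_mult_nonneg[OF hat_roots_mult_nonneg[OF assms(1)]] assms(2) by auto
  with assms(1) show "w \<in> \<Delta>" by (simp add: hat_roots_zero_mode)
qed

lemma mode_le_mode_sum:
  fixes S :: "('a \<times> nat) set"
  assumes "finite S" "(i, k) \<in> S"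
  shows "k \<le> (\<Sum>(i,k)\<in>S. k)"
  using member_le_sum[of "(i, k)" S "\<lambda>(i,k). k"] assms by simp

text \<open>At most |F| t pairs have a mode below t, and at most t have mode t or more.\<close>
lemma card_le_of_mode_sum:
  fixes S :: "('a \<times> nat) set"
  assumes "finite F" "S \<subseteq> F \<times> UNIV" "finite S" "(\<Sum>(i,k)\<in>S. k) \<le> t * t" "0 < t"
  shows "card S \<le> (card F + 1) * t"
proof -
  define low where "low = {x\<in>S. snd x < t}"
  define high where "high = {x\<in>S. t \<le> snd x}"
  have "card low \<le> card (F \<times> {..<t})"
    by (rule card_mono) (use assms(1,2) in \<open>auto simp: low_def\<close>)
  then have card_low: "card low \<le> card F * t"
    by (simp add: card_cartesian_product)
  have "t * card high = (\<Sum>x\<in>high. t)" by simp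
  also have "\<dots> \<le> (\<Sum>x\<in>high. snd x)" by (rule sum_mono) (auto simp: high_def)
  also have "\<dots> \<le> (\<Sum>x\<in>S. snd x)" by (rule sum_mono2) (use assms(3) in \<open>auto simp: high_def\<close>)
  also have "\<dots> \<le> t * t" using assms(4) by (simp add: split_beta)
  finally have "card high \<le> t" using \<open>0 < t\<close> by simp
  moreover have "card S = card low + card high"
    unfolding low_def high_def using assms(3)
    by (subst card_Un_disjoint[symmetric]) (auto intro: arg_cong[where f = card])
  ultimately show ?thesis using card_low by simp
qed

lemma finite_fidx: "finite \<Delta> \<Longrightarrow> finite (fidx \<Delta>)"
  by (simp add: fidx_def)

lemma fwt_inner_bound:
  assumes "finite \<Delta>" "i \<in> fidx \<Delta>"
  shows "\<bar>fwt i \<bullet> \<eta>\<bar> \<le> (\<Sum>\<alpha>\<in>\<Delta>. \<bar>\<alpha> \<bullet> \<eta>\<bar>)"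
  using assms member_le_sum[of _ \<Delta> "\<lambda>\<alpha>. \<bar>\<alpha> \<bullet> \<eta>\<bar>"] by (auto simp: fidx_def sum_nonneg)

lemma state_weight_inner_bound:
  assumes "finite \<Delta>" "S \<subseteq> fidx \<Delta> \<times> UNIV" "finite S"
  shows "\<bar>(\<Sum>(i,k)\<in>S. fwt i) \<bullet> \<eta>\<bar> \<le> real (card S) * (\<Sum>\<alpha>\<in>\<Delta>. \<bar>\<alpha> \<bullet> \<eta>\<bar>)"
proof -
  have "\<bar>(\<Sum>(i,k)\<in>S. fwt i) \<bullet> \<eta>\<bar> = \<bar>\<Sum>x\<in>S. fwt (fst x) \<bullet> \<eta>\<bar>"
    by (simp add: split_beta inner_sum_left)
  also have "\<dots> \<le> (\<Sum>x\<in>S. \<bar>fwt (fst x) \<bullet> \<eta>\<bar>)" by (rule sum_abs)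
  also have "\<dots> \<le> (\<Sum>x\<in>S. \<Sum>\<alpha>\<in>\<Delta>. \<bar>\<alpha> \<bullet> \<eta>\<bar>)"
    by (rule sum_mono, rule fwt_inner_bound) (use assms(1,2) in auto)
  finally show ?thesis by simp
qed

definition weight_slope :: "(real^'r) set \<Rightarrow> (real^'r) set \<Rightarrow> real^'r \<Rightarrow> real" where
  "weight_slope \<Delta> \<Delta>p \<eta> =
     \<bar>weyl_vector \<Delta>p \<bullet> \<eta>\<bar> + real (card (fidx \<Delta>) + 1) * (\<Sum>\<alpha>\<in>\<Delta>. \<bar>\<alpha> \<bullet> \<eta>\<bar>)"

lemma weight_slope_nonneg: "0 \<le> weight_slope \<Delta> \<Delta>p \<eta>"
  unfolding weight_slope_def by (simp add: sum_nonneg)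

lemma hat_roots_weight_bound:
  assumes fin: "finite \<Delta>" and root: "(m, n, w) \<in> hat_roots \<Delta> \<Delta>p" and "m + n \<noteq> 0"
  shows "\<bar>w \<bullet> \<eta>\<bar> \<le> weight_slope \<Delta> \<Delta>p \<eta> * \<bar>real_of_int (m + n)\<bar>"
proof -
  obtain c S where c: "c \<in> {0, - weyl_vector \<Delta>p}" and S: "finite S" "S \<subseteq> fidx \<Delta> \<times> UNIV"
    and modes: "int (\<Sum>(i,k)\<in>S. k) \<le> m * n" and w: "w = c + (\<Sum>(i,k)\<in>S. fwt i)"
    using root by (rule hat_roots_state)
  define M where "M = (\<Sum>\<alpha>\<in>\<Delta>. \<bar>\<alpha> \<bullet> \<eta>\<bar>)"
  define t where "t = nat \<bar>m + n\<bar>"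
  have t: "int t = \<bar>m + n\<bar>" "0 < t" using \<open>m + n \<noteq> 0\<close> by (auto simp: t_def)
  have "m * n \<le> \<bar>m\<bar> * \<bar>n\<bar>" by (metis abs_ge_self abs_mult)
  also have "\<dots> \<le> \<bar>m + n\<bar> * \<bar>m + n\<bar>"
    unfolding abs_add_eq_of_mult_nonneg[OF hat_roots_mult_nonneg[OF root]]
    by (intro mult_mono) auto
  also have "\<dots> = int (t * t)" using t(1) by simp
  finally have "int (\<Sum>(i,k)\<in>S. k) \<le> int (t * t)" using modes by (rule order.trans[rotated])
  then have "(\<Sum>(i,k)\<in>S. k) \<le> t * t" by (simp only: of_nat_le_iff)
  then have card_S: "card S \<le> (card (fidx \<Delta>) + 1) * t"
    using card_le_of_mode_sum[OF finite_fidx[OF fin] S(2) S(1)] t by blast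
  have "0 \<le> M" by (simp add: M_def sum_nonneg)
  have "\<bar>w \<bullet> \<eta>\<bar> \<le> \<bar>c \<bullet> \<eta>\<bar> + \<bar>(\<Sum>(i,k)\<in>S. fwt i) \<bullet> \<eta>\<bar>"
    unfolding w inner_add_left by (rule abs_triangle_ineq)
  also have "\<dots> \<le> \<bar>weyl_vector \<Delta>p \<bullet> \<eta>\<bar> + real (card S) * M"
  proof (rule add_mono)
    show "\<bar>c \<bullet> \<eta>\<bar> \<le> \<bar>weyl_vector \<Delta>p \<bullet> \<eta>\<bar>" using c by auto
    show "\<bar>(\<Sum>(i,k)\<in>S. fwt i) \<bullet> \<eta>\<bar> \<le> real (card S) * M"
      unfolding M_def by (rule state_weight_inner_bound[OF fin S(2,1)])
  qed
  also have "\<dots> \<le> \<bar>weyl_vector \<Delta>p \<bullet> \<eta>\<bar> * real t + real ((card (fidx \<Delta>) + 1) * t) * M"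
  proof (rule add_mono)
    show "\<bar>weyl_vector \<Delta>p \<bullet> \<eta>\<bar> \<le> \<bar>weyl_vector \<Delta>p \<bullet> \<eta>\<bar> * real t"
      using \<open>0 < t\<close> by (simp add: mult_le_cancel_left1)
    have "real (card S) \<le> real ((card (fidx \<Delta>) + 1) * t)"
      using card_S by (simp only: of_nat_le_iff)
    with \<open>0 \<le> M\<close> show "real (card S) * M \<le> real ((card (fidx \<Delta>) + 1) * t) * M"
      by (rule mult_right_mono[rotated])
  qed
  also have "\<dots> = weight_slope \<Delta> \<Delta>p \<eta> * \<bar>real_of_int (m + n)\<bar>"
  proof -
    have "real t = \<bar>real_of_int (m + n)\<bar>" using t(1) by (metis of_int_abs of_int_of_nat_eq)
    then show ?thesis by (simp add: weight_slope_def M_def algebra_simps)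
  qed
  finally show ?thesis .
qed

lemma abs_perturbed_mult_lower_bound:
  fixes a x y A :: real
  assumes "\<bar>y\<bar> \<le> A * \<bar>x\<bar>"
  shows "(a - A) * \<bar>x\<bar> \<le> \<bar>a * x + y\<bar>"
    and "0 \<le> x \<Longrightarrow> (a - A) * x \<le> a * x + y"
proof -
  show "(a - A) * \<bar>x\<bar> \<le> \<bar>a * x + y\<bar>"
    using assms by (cases "0 \<le> x") (auto simp: algebra_simps abs_if split: if_splits)
  assume "0 \<le> x"
  with assms show "(a - A) * x \<le> a * x + y" by (simp add: algebra_simps)
qed

lemma hat_roots_hval_lower_bound:
  assumes "finite \<Delta>" "(m, n, w) \<in> hat_roots \<Delta> \<Delta>p" "m + n \<noteq> 0"
  shows "(real_of_int L - weight_slope \<Delta> \<Delta>p \<eta>) * \<bar>real_of_int (m + n)\<bar> \<le> \<bar>hval L \<eta> (m, n, w)\<bar>"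
    and "0 < m + n \<Longrightarrow>
      (real_of_int L - weight_slope \<Delta> \<Delta>p \<eta>) * real_of_int (m + n) \<le> hval L \<eta> (m, n, w)"
  using abs_perturbed_mult_lower_bound[OF hat_roots_weight_bound[OF assms], of "real_of_int L"]
  by (simp_all add: hval_def)

lemma hat_roots_hval_nonzero:
  assumes "finite \<Delta>" "\<forall>\<alpha>\<in>\<Delta>. \<alpha> \<bullet> \<eta> \<noteq> 0" "weight_slope \<Delta> \<Delta>p \<eta> < real_of_int L"
    and "\<gamma> \<in> hat_roots \<Delta> \<Delta>p"
  shows "hval L \<eta> \<gamma> \<noteq> 0"
proof -
  obtain m n w where \<gamma>: "\<gamma> = (m, n, w)" by (cases \<gamma>)
  with assms(4) have root: "(m, n, w) \<in> hat_roots \<Delta> \<Delta>p" by simp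
  show ?thesis
  proof (cases "m + n = 0")
    case True
    with assms(2) show ?thesis by (simp add: \<gamma> hat_roots_level_zero[OF root True] hval_def)
  next
    case False
    then have "0 < (real_of_int L - weight_slope \<Delta> \<Delta>p \<eta>) * \<bar>real_of_int (m + n)\<bar>"
      using assms(3) by simp
    with hat_roots_hval_lower_bound(1)[OF assms(1) root False, where L = L and \<eta> = \<eta>]
    show ?thesis by (auto simp: \<gamma>)
  qed
qed

lemma hat_roots_hval_pos:
  assumes "finite \<Delta>" "weight_slope \<Delta> \<Delta>p \<eta> < real_of_int L"
    and root: "(m, n, w) \<in> hat_roots \<Delta> \<Delta>p" and "0 < m \<or> 0 < n"
  shows "0 < hval L \<eta> (m, n, w)"
proof -
  have "0 < m + n"
    using abs_add_eq_of_mult_nonneg[OF hat_roots_mult_nonneg[OF root]] \<open>0 < m \<or> 0 < n\<close> by auto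
  then have "0 < (real_of_int L - weight_slope \<Delta> \<Delta>p \<eta>) * real_of_int (m + n)"
    using assms(2) by simp
  moreover have "m + n \<noteq> 0" using \<open>0 < m + n\<close> by simp
  ultimately show ?thesis
    using hat_roots_hval_lower_bound(2)[OF assms(1) root _ \<open>0 < m + n\<close>, where L = L and \<eta> = \<eta>]
    by linarith
qed

lemma hat_roots_bounded_finite:
  assumes fin: "finite \<Delta>"
  shows "finite {(m, n, w). (m, n, w) \<in> hat_roots \<Delta> \<Delta>p \<and> \<bar>m + n\<bar> \<le> B}"
proof -
  define W where "W = (\<lambda>(c, S). c + (\<Sum>(i,k)\<in>S. fwt i)) `
    ({0, - weyl_vector \<Delta>p} \<times> Pow (fidx \<Delta> \<times> {..nat (B * B)}))"
  have "(m, n, w) \<in> {-B..B} \<times> {-B..B} \<times> W"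
    if root: "(m, n, w) \<in> hat_roots \<Delta> \<Delta>p" and "\<bar>m + n\<bar> \<le> B" for m n w
  proof -
    have mn: "\<bar>m\<bar> \<le> B" "\<bar>n\<bar> \<le> B"
      using that abs_add_eq_of_mult_nonneg[OF hat_roots_mult_nonneg[OF root]] by auto
    obtain c S where c: "c \<in> {0, - weyl_vector \<Delta>p}" and S: "finite S" "S \<subseteq> fidx \<Delta> \<times> UNIV"
      and modes: "int (\<Sum>(i,k)\<in>S. k) \<le> m * n" and w: "w = c + (\<Sum>(i,k)\<in>S. fwt i)"
      using root by (rule hat_roots_state)
    have "m * n \<le> \<bar>m\<bar> * \<bar>n\<bar>" by (metis abs_ge_self abs_mult)
    also have "\<dots> \<le> B * B" using mn by (intro mult_mono) auto
    finally have "m * n \<le> B * B" .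
    have "S \<subseteq> fidx \<Delta> \<times> {..nat (B * B)}"
    proof (rule subsetI, unfold split_paired_all)
      fix i k assume ik: "(i, k) \<in> S"
      have "int k \<le> int (\<Sum>(i,k)\<in>S. k)"
        using mode_le_mode_sum[OF S(1) ik] by (simp only: of_nat_le_iff)
      also note modes
      also note \<open>m * n \<le> B * B\<close>
      finally have "k \<le> nat (B * B)" by linarith
      with ik S(2) show "(i, k) \<in> fidx \<Delta> \<times> {..nat (B * B)}" by auto
    qed
    with c have "w \<in> W" unfolding W_def w by (intro rev_image_eqI[of "(c, S)"]) auto
    with mn show ?thesis by auto
  qed
  then have "{(m, n, w). (m, n, w) \<in> hat_roots \<Delta> \<Delta>p \<and> \<bar>m + n\<bar> \<le> B}
      \<subseteq> {-B..B} \<times> {-B..B} \<times> W"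
    by auto
  moreover have "finite ({-B..B} \<times> {-B..B} \<times> W)"
    unfolding W_def using finite_fidx[OF fin] by simp
  ultimately show ?thesis by (rule finite_subset)
qed

lemma hat_roots_hval_bounded_finite:
  assumes "finite \<Delta>" "weight_slope \<Delta> \<Delta>p \<eta> + 1 \<le> real_of_int L"
  shows "finite {\<gamma> \<in> hat_roots \<Delta> \<Delta>p. \<bar>hval L \<eta> \<gamma>\<bar> < N}"
proof -
  have "\<bar>m + n\<bar> \<le> \<lceil>N\<rceil>" if root: "(m, n, w) \<in> hat_roots \<Delta> \<Delta>p" and "\<bar>hval L \<eta> (m, n, w)\<bar> < N"
    for m n w
  proof (cases "m + n = 0")
    case True
    have "0 < N" using that(2) abs_ge_zero[of "hval L \<eta> (m, n, w)"] by linarith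
    with True show ?thesis by simp
  next
    case False
    have "\<bar>real_of_int (m + n)\<bar>
        \<le> (real_of_int L - weight_slope \<Delta> \<Delta>p \<eta>) * \<bar>real_of_int (m + n)\<bar>"
      using assms(2) by (simp add: mult_le_cancel_right1)
    with hat_roots_hval_lower_bound(1)[OF assms(1) root False, where L = L and \<eta> = \<eta>] that(2)
    have "\<bar>real_of_int (m + n)\<bar> < N" by linarith
    then have "real_of_int \<bar>m + n\<bar> < real_of_int \<lceil>N\<rceil>"
      using le_of_int_ceiling[of N] by (simp only: of_int_abs)
    then show ?thesis by (simp only: of_int_less_iff less_imp_le)
  qed
  then have "{\<gamma> \<in> hat_roots \<Delta> \<Delta>p. \<bar>hval L \<eta> \<gamma>\<bar> < N}
      \<subseteq> {(m, n, w). (m, n, w) \<in> hat_roots \<Delta> \<Delta>p \<and> \<bar>m + n\<bar> \<le> \<lceil>N\<rceil>}"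
    by auto
  then show ?thesis by (rule finite_subset) (rule hat_roots_bounded_finite[OF assms(1)])
qed

lemma hat_roots_isotropic_hval_gt:
  assumes rs: "is_root_system \<Delta>"
    and L: "weight_slope \<Delta> \<Delta>p \<eta> + (\<Sum>\<alpha>\<in>\<Delta>. \<bar>\<alpha> \<bullet> \<eta>\<bar>) < real_of_int L"
    and \<gamma>: "\<gamma> \<in> hat_roots \<Delta> \<Delta>p" "norm2 \<Delta> \<gamma> = 0" and root': "(0, 0, w') \<in> hat_roots \<Delta> \<Delta>p"
  shows "\<bar>hval L \<eta> (0, 0, w')\<bar> < \<bar>hval L \<eta> \<gamma>\<bar>"
proof -
  have fin: "finite \<Delta>" and "0 \<notin> \<Delta>" and sp: "span \<Delta> = UNIV"
    using rs by (auto simp: is_root_system_def)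
  obtain m n w where \<gamma>_eq: "\<gamma> = (m, n, w)" by (cases \<gamma>)
  with \<gamma> have root: "(m, n, w) \<in> hat_roots \<Delta> \<Delta>p" by simp
  have "m + n \<noteq> 0"
  proof
    assume "m + n = 0"
    note level_zero = hat_roots_level_zero[OF root this]
    with \<open>0 \<notin> \<Delta>\<close> have "0 < dform \<Delta> w w" by (intro dform_self_pos[OF fin sp]) auto
    with \<gamma>(2) show False by (simp add: \<gamma>_eq level_zero norm2_def)
  qed
  have "\<bar>hval L \<eta> (0, 0, w')\<bar> \<le> (\<Sum>\<alpha>\<in>\<Delta>. \<bar>\<alpha> \<bullet> \<eta>\<bar>)"
    using hat_roots_zero_mode[OF root'] fin member_le_sum[of w' \<Delta> "\<lambda>\<alpha>. \<bar>\<alpha> \<bullet> \<eta>\<bar>"]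
    by (simp add: hval_def)
  also have "\<dots> < (real_of_int L - weight_slope \<Delta> \<Delta>p \<eta>) * \<bar>real_of_int (m + n)\<bar>"
  proof -
    have "1 \<le> \<bar>real_of_int (m + n)\<bar>" using \<open>m + n \<noteq> 0\<close> by linarith
    moreover have "0 \<le> (\<Sum>\<alpha>\<in>\<Delta>. \<bar>\<alpha> \<bullet> \<eta>\<bar>)" by (simp add: sum_nonneg)
    ultimately have "(real_of_int L - weight_slope \<Delta> \<Delta>p \<eta>) * 1
        \<le> (real_of_int L - weight_slope \<Delta> \<Delta>p \<eta>) * \<bar>real_of_int (m + n)\<bar>"
      using L by (intro mult_left_mono) linarith+
    with L show ?thesis by simp
  qed
  also have "\<dots> \<le> \<bar>hval L \<eta> \<gamma>\<bar>"
    using hat_roots_hval_lower_bound(1)[OF fin root \<open>m + n \<noteq> 0\<close>] by (simp add: \<gamma>_eq)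
  finally show ?thesis .
qed

theorem mainTheorem1:
  fixes \<Delta> \<Delta>p :: "(real^'r) set" and \<eta> :: "real^'r"
  assumes "is_root_system \<Delta>"
    and "card \<Delta> + CARD('r) = 24"
    and "is_pos_system \<Delta> \<Delta>p"
    and "\<eta> \<in> coroot_lattice \<Delta>"
    and "\<forall>\<alpha>\<in>\<Delta>. \<alpha> \<bullet> \<eta> \<noteq> 0"
  shows "\<exists>L::int. L > 0 \<and>
    (\<forall>\<gamma>\<in>hat_roots \<Delta> \<Delta>p. hval L \<eta> \<gamma> \<noteq> 0) \<and>
    (\<forall>m n w. (m,n,w) \<in> hat_roots \<Delta> \<Delta>p \<and> (m > 0 \<or> n > 0) \<longrightarrow> hval L \<eta> (m,n,w) > 0) \<and>
    (\<forall>N::real. N > 0 \<longrightarrow>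
       finite {\<gamma>\<in>hat_roots \<Delta> \<Delta>p. 0 < \<bar>hval L \<eta> \<gamma>\<bar> \<and> \<bar>hval L \<eta> \<gamma>\<bar> < N}) \<and>
    (\<forall>\<alpha>\<in>hat_roots \<Delta> \<Delta>p. \<forall>w'. norm2 \<Delta> \<alpha> = 0 \<and> (0,0,w') \<in> hat_roots \<Delta> \<Delta>p \<longrightarrow>
       \<bar>hval L \<eta> \<alpha>\<bar> > \<bar>hval L \<eta> (0,0,w')\<bar>)"
proof -
  have fin: "finite \<Delta>" using assms(1) by (simp add: is_root_system_def)
  define A where "A = weight_slope \<Delta> \<Delta>p \<eta>"
  define M where "M = (\<Sum>\<alpha>\<in>\<Delta>. \<bar>\<alpha> \<bullet> \<eta>\<bar>)"
  define L where "L = \<lceil>A + M\<rceil> + 1"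
  have "0 \<le> A" "0 \<le> M" by (simp_all add: A_def M_def weight_slope_nonneg sum_nonneg)
  moreover have "A + M + 1 \<le> real_of_int L" unfolding L_def by linarith
  ultimately have "0 < L" and A_M: "A + M < real_of_int L" and A_1: "A + 1 \<le> real_of_int L"
    by linarith+
  then have A: "A < real_of_int L" by linarith
  have "finite {\<gamma> \<in> hat_roots \<Delta> \<Delta>p. 0 < \<bar>hval L \<eta> \<gamma>\<bar> \<and> \<bar>hval L \<eta> \<gamma>\<bar> < N}" for N
    by (rule finite_subset[OF _ hat_roots_hval_bounded_finite[OF fin A_1[unfolded A_def]]]) auto
  with \<open>0 < L\<close> show ?thesis
    using hat_roots_hval_nonzero[OF fin assms(5) A[unfolded A_def]]
      hat_roots_hval_pos[OF fin A[unfolded A_def]]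
      hat_roots_isotropic_hval_gt[OF assms(1) A_M[unfolded A_def M_def]]
    by blast
qed

end
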